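(* Let $m=2$ with $\mathcal P=\{\mathcal P_1,\mathcal P_2\}$ and cluster natural frequencies $\omega_1\le\omega_2$. Let $\bar\omega=\omega_2-\omega_1$ and $$\bar a=\sum_{k\in\mathcal P_2}a_{ik}+\sum_{k\in\mathcal P_1}a_{jk}$$ for any $i\in\mathcal P_1$, $j\in\mathcal P_2$, and assume $\bar\omega>\bar a$. If $$J_{\text{intra}}=\partial F/\partial x_{\text{intra}}\big|_{x_{\text{intra}}=0}=\alpha I$$ for some constant $\alpha<0$, then $\mathcal S_{\mathcal P}$ is locally exponentially stable.
   Context: **Graph and dynamics.** Let $\mathcal G=(\mathcal V,\mathcal E)$ be a connected, undirected, weighted graph with $\mathcal V=\{1,\dots,n\}$ and no self-loops. Its adjacency matrix $A=[a_{ij}]$ is symmetric, with $a_{ij}>0$ if $(i,j)\in\mathcal E$ and $0$ otherwise. The Kuramoto dynamics are $$\dot\theta_i=\omega_i+\sum_{j\neq i}a_{ij}\sin(\theta_j-\theta_i),$$ with $\theta_i\in\mathbb S^1$ and $\omega_i>0$. **Partition and manifold.** $\mathcal P=\{\mathcal P_1,\dots,\mathcal P_m\}$ is a partition of $\mathcal V$, and each induced subgraph $\mathcal G_k=(\mathcal P_k,\mathcal E_k)$ is connected. The cluster synchronization manifold is $$\mathcal S_{\mathcal P}=\{\theta:\theta_i=\theta_j\ \text{for all } i,j\text{ in the same cluster}\}.$$ **Standing assumptions.** - (A2) Equal natural frequencies within each cluster; write $\omega_k$ for the value on $\mathcal P_k$. - (A3) $\sum_{k\in\mathcal P_\ell}(a_{ik}-a_{jk})=0$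 for all $i,j\in\mathcal P_z$ and all $z\ne\ell$. **Stability notion.** $\mathcal S_{\mathcal P}$ is locally exponentially stable if there exist $\delta,c,\lambda>0$ with $$\mathrm{dist}(\theta(t),\mathcal S_{\mathcal P})\le ce^{-\lambda t}\,\mathrm{dist}(\theta(0),\mathcal S_{\mathcal P})$$ whenever $\mathrm{dist}(\theta(0),\mathcal S_{\mathcal P})<\delta$. **Coordinates.** Let $\mathcal T_k=(\mathcal P_k,\mathcal E_{\text{span},k})$ be spanning trees of $\mathcal G_k$. Let $\mathcal T$ be a spanning tree of $\mathcal G$ with edges $\bigcup_k\mathcal E_{\text{span},k}\cup\mathcal E_{\text{inter}}$ and $|\mathcal E_{\text{inter}}|=m-1$. Write $x_{ij}=\theta_j-\theta_i$. - $x_{\text{intra}}$ stacks $x_{ij}$ over $(i,j)\in\mathcal E_{\text{span},k}$, $i<j$, for $k=1,\dots,m$. - $x_{\text{inter}}$ stacks $x_{ij}$ over $(i,j)\in\mathcal E_{\text{inter}}$. - Every $x_{ij}$ equals a signed sum, $\mathrm{diff}(\mathrm p(i,j))$, of these coordinates along the unique path $\mathrm p(i,j)$ in $\mathcal T$. **Intra-cluster dynamics.** For $(i,j)\in\mathcal E_{\text{span},k}$, $\dot x_{ij}=F^{(k)}_{ij}+G^{(k)}_{ij}$, where $$F^{(k)}_{ij}=\sum_{z\in\mathcal P_k}\big[a_{jz}\sin(\mathrm{diff}(\mathrm p(j,z)))-a_{iz}\sin(\mathrm{diff}(\mathrm p(i,z)))\big],$$ and $G^{(k)}_{ij}$ is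 the same sum over $z\notin\mathcal P_k$. Stacking gives $\dot x_{\text{intra}}=F(x_{\text{intra}})+G(x_{\text{intra}},x_{\text{inter}})$. *)

theory Defs
  imports "HOL-Analysis.Analysis"
begin

text \<open>Vertices are the elements of a finite linearly ordered type 'n; phases are
lifted to real vectors (covering space of the torus).\<close>

definition kuramoto :: "('n::finite \<Rightarrow> 'n \<Rightarrow> real) \<Rightarrow> ('n \<Rightarrow> real) \<Rightarrow> real^'n \<Rightarrow> real^'n" where
  "kuramoto a \<omega> \<theta> = (\<chi> i. \<omega> i + (\<Sum>j\<in>UNIV - {i}. a i j * sin (\<theta>$j - \<theta>$i)))"

definition connected_on :: "'n set \<Rightarrow> ('n \<times> 'n) set \<Rightarrow> bool" where
  "connected_on V E \<longleftrightarrow> (\<forall>i\<in>V. \<forall>j\<in>V. (i, j) \<in> ((E \<union> E\<inverse>) \<inter> (V \<times> V))\<^sup>*)"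

definition graph_edges :: "('n \<Rightarrow> 'n \<Rightarrow> real) \<Rightarrow> ('n \<times> 'n) set" where
  "graph_edges a = {(i, j). a i j > 0}"

definition spanning_tree :: "('n::{finite,linorder} \<Rightarrow> 'n \<Rightarrow> real) \<Rightarrow> 'n set \<Rightarrow> ('n \<times> 'n) set \<Rightarrow> bool" where
  "spanning_tree a P E \<longleftrightarrow>
     E \<subseteq> {(i, j). i \<in> P \<and> j \<in> P \<and> i < j \<and> a i j > 0} \<and>
     connected_on P E \<and> card E = card P - 1"

text \<open>diff(p(u,v)): the signed sum of the tree coordinates x along the unique
tree path from u to v, i.e. the difference phi v - phi u of any potential phi
whose increments along the tree edges are the coordinates x.\<close>
definition path_diff :: "('n::finite \<times> 'n) set \<Rightarrow> real^('n \<times> 'n) \<Rightarrow> 'n \<Rightarrow> 'n \<Rightarrow> real" where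
  "path_diff E x u v = (SOME d. \<exists>\<phi>::'n \<Rightarrow> real.
      (\<forall>(p, q)\<in>E. \<phi> q - \<phi> p = x $ (p, q)) \<and> d = \<phi> v - \<phi> u)"

text \<open>Intra-cluster part F of the intra-cluster dynamics for m = 2, in the
coordinates x_intra (components indexed by the tree edges E1 \<union> E2; the other
components of the vector are unused and F is set to 0 there).\<close>
definition F_intra :: "('n::finite \<Rightarrow> 'n \<Rightarrow> real) \<Rightarrow> 'n set \<Rightarrow> 'n set \<Rightarrow> ('n \<times> 'n) set \<Rightarrow> ('n \<times> 'n) set
    \<Rightarrow> real^('n \<times> 'n) \<Rightarrow> real^('n \<times> 'n)" where
  "F_intra a P1 P2 E1 E2 x = (\<chi> e. (case e of (i, j) \<Rightarrow>
     if e \<in> E1 then (\<Sum>z\<in>P1. a j z * sin (path_diff (E1 \<union> E2) x j z) - a i z * sin (path_diff (E1 \<union> E2) x i z))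
     else if e \<in> E2 then (\<Sum>z\<in>P2. a j z * sin (path_diff (E1 \<union> E2) x j z) - a i z * sin (path_diff (E1 \<union> E2) x i z))
     else 0))"

definition sync_manifold :: "'n::finite set set \<Rightarrow> (real^'n) set" where
  "sync_manifold Ps = {\<theta>. \<forall>P\<in>Ps. \<forall>i\<in>P. \<forall>j\<in>P. \<exists>k::int. \<theta>$j - \<theta>$i = 2 * pi * of_int k}"

definition locally_exp_stable :: "(real^('n::finite) \<Rightarrow> real^'n) \<Rightarrow> (real^'n) set \<Rightarrow> bool" where
  "locally_exp_stable f S \<longleftrightarrow>
     (\<exists>\<delta>>0. \<exists>c>0. \<exists>lam>0. \<forall>\<theta>::real \<Rightarrow> real^'n.
        (\<forall>t\<ge>0. (\<theta> has_vector_derivative f (\<theta> t)) (at t within {0..})) \<and> infdist (\<theta> 0) S < \<delta>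
        \<longrightarrow> (\<forall>t\<ge>0. infdist (\<theta> t) S \<le> c * exp (- lam * t) * infdist (\<theta> 0) S))"

end

theory Submission
  imports Defs
begin

text \<open>Write a phase vector as its two cluster means plus the intra-cluster deviations \<open>u\<close>
  (of mean zero on each cluster), and let \<open>\<phi>\<close> be the difference of the cluster means. By (A3) and
  the hypothesis on the Jacobian, \<open>u' = \<alpha> u + cos \<phi> M u + O(|u|\<^sup>2)\<close> and
  \<open>\<phi>' = \<omega>bar - abar sin \<phi> + O(|u|\<^sup>2)\<close>, with \<open>M\<close> the linear inter-cluster coupling. Since
  \<open>\<omega>bar > abar\<close>, the function \<open>g \<phi> = - ln (\<omega>bar - abar sin \<phi>) / abar\<close> is bounded and its
  derivative along trajectories is \<open>cos \<phi>\<close> up to \<open>O(|u|\<^sup>2)\<close>. Hence \<open>w = exp (- g \<phi> M) u\<close>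
  satisfies \<open>w' = \<alpha> w + O(|w|\<^sup>2)\<close> with \<open>|w|\<close> comparable to \<open>|u|\<close>, so near the manifold \<open>|u|\<close>
  decays like \<open>exp (\<alpha> t / 2)\<close>; and \<open>|u|\<close> controls the distance to the synchronization manifold
  up to the \<open>2\<pi>\<close>-periodicity of the phases.\<close>

section \<open>Endomorphisms of a Euclidean space as a Banach algebra\<close>

text \<open>A type of its own, so that the exponential of \<open>real_normed_algebra_1\<close> applies.\<close>
typedef (overloaded) ('a::euclidean_space) endo = "UNIV :: ('a \<Rightarrow>\<^sub>L 'a) set"
  morphisms Rep_endo Abs_endo by simp

setup_lifting type_definition_endo

instantiation endo :: (euclidean_space) real_normed_vector
begin
lift_definition norm_endo :: "'a endo \<Rightarrow> real" is norm .
lift_definition minus_endo :: "'a endo \<Rightarrow> 'a endo \<Rightarrow> 'a endo" is "(-)" .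
lift_definition uminus_endo :: "'a endo \<Rightarrow> 'a endo" is "uminus" .
lift_definition zero_endo :: "'a endo" is "0" .
lift_definition plus_endo :: "'a endo \<Rightarrow> 'a endo \<Rightarrow> 'a endo" is "(+)" .
lift_definition scaleR_endo :: "real \<Rightarrow> 'a endo \<Rightarrow> 'a endo" is "scaleR" .
definition dist_endo :: "'a endo \<Rightarrow> 'a endo \<Rightarrow> real" where "dist_endo a b = norm (a - b)"
definition sgn_endo :: "'a endo \<Rightarrow> 'a endo" where "sgn_endo x = scaleR (inverse (norm x)) x"
definition uniformity_endo :: "('a endo \<times> 'a endo) filter" where
  "uniformity_endo = (INF e\<in>{0 <..}. principal {(x, y). dist x y < e})"

definition open_endo :: "'a endo set \<Rightarrow> bool" where
  "open_endo S = (\<forall>x\<in>S. \<forall>\<^sub>F (x', y) in uniformity. x' = x \<longrightarrow> y \<in> S)"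
instance
  by standard
    (unfold dist_endo_def open_endo_def sgn_endo_def uniformity_endo_def,
     (rule refl | (transfer, force simp: norm_triangle_ineq algebra_simps))+)
end

lemma id_blinfun_neq_zero: "id_blinfun \<noteq> (0 :: 'a::euclidean_space \<Rightarrow>\<^sub>L 'a)"
proof
  obtain b :: 'a where "b \<in> Basis" using nonempty_Basis by blast
  moreover assume "id_blinfun = (0 :: 'a \<Rightarrow>\<^sub>L 'a)"
  then have "blinfun_apply id_blinfun b = 0" by simp
  ultimately show False using nonzero_Basis by simp
qed

instantiation endo :: (euclidean_space) real_normed_algebra_1
begin
lift_definition times_endo :: "'a endo \<Rightarrow> 'a endo \<Rightarrow> 'a endo" is "(o\<^sub>L)" .
lift_definition one_endo :: "'a endo" is "id_blinfun" .
instance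
  by standard (transfer; auto intro!: blinfun_eqI norm_blinfun_compose
      simp: blinfun.bilinear_simps id_blinfun_neq_zero[symmetric])+
end

instance endo :: (euclidean_space) banach
proof
  fix X :: "nat \<Rightarrow> 'a endo"
  assume "Cauchy X"
  then have "Cauchy (\<lambda>n. Rep_endo (X n))"
    unfolding Cauchy_def dist_norm by (simp add: norm_endo.rep_eq minus_endo.rep_eq)
  then obtain L where "(\<lambda>n. Rep_endo (X n)) \<longlonglongrightarrow> L"
    using convergent_eq_Cauchy by blast
  then have "X \<longlonglongrightarrow> Abs_endo L"
    unfolding lim_sequentially dist_norm
    by (simp add: norm_endo.rep_eq minus_endo.rep_eq Abs_endo_inverse)
  then show "convergent X" by (auto simp: convergent_def)
qed

lift_definition endo_apply :: "'a::euclidean_space endo \<Rightarrow> 'a \<Rightarrow> 'a" is blinfun_apply .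

lemma bounded_bilinear_endo_apply: "bounded_bilinear endo_apply"
  by (rule bounded_bilinear.intro; transfer)
    (auto simp: blinfun.bilinear_simps intro!: exI[of _ 1] norm_blinfun)

lemma endo_apply_mult: "endo_apply (A * B) x = endo_apply A (endo_apply B x)"
  by transfer simp

lemma endo_apply_one [simp]: "endo_apply 1 x = x"
  by transfer simp

lemma norm_endo_apply_le: "norm (endo_apply A x) \<le> norm A * norm x"
  by transfer (rule norm_blinfun)

lemma endo_apply_Abs_Blinfun:
  "bounded_linear f \<Longrightarrow> endo_apply (Abs_endo (Blinfun f)) x = f x"
  by (simp add: endo_apply.rep_eq Abs_endo_inverse bounded_linear_Blinfun_apply)

lemma endo_apply_exp_inverse: "endo_apply (exp (s *\<^sub>R A)) (endo_apply (exp ((- s) *\<^sub>R A)) x) = x"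
  by (metis endo_apply_mult endo_apply_one exp_minus_inverse scaleR_minus_left)

definition sin_remainder :: "real \<Rightarrow> real \<Rightarrow> real" where
  "sin_remainder b d = sin (b + d) - sin b - cos b * d"

lemma abs_sin_remainder_le: "\<bar>sin_remainder b d\<bar> \<le> d\<^sup>2"
proof -
  have sin_err: "\<bar>sin d - d\<bar> \<le> d\<^sup>2 / 2"
    using Maclaurin_sin_bound[of d 2] by (simp add: sin_coeff_def numeral_2_eq_2 power2_eq_square)
  have "(sin (d/2))\<^sup>2 \<le> (d/2)\<^sup>2"
    using abs_sin_x_le_abs_x[of "d/2"] by (metis abs_le_square_iff)
  then have cos_err: "\<bar>cos d - 1\<bar> \<le> d\<^sup>2 / 2"
    using cos_double_sin[of "d/2"] by (simp add: power_divide)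
  have "sin_remainder b d = sin b * (cos d - 1) + cos b * (sin d - d)"
    by (simp add: sin_remainder_def sin_add algebra_simps)
  also have "\<bar>\<dots>\<bar> \<le> \<bar>sin b\<bar> * \<bar>cos d - 1\<bar> + \<bar>cos b\<bar> * \<bar>sin d - d\<bar>"
    by (metis abs_mult abs_triangle_ineq)
  also have "\<dots> \<le> 1 * (d\<^sup>2/2) + 1 * (d\<^sup>2/2)"
    using sin_err cos_err by (intro add_mono mult_mono) auto
  finally show ?thesis by simp
qed

lemma exp_weighted_norm_antimono:
  fixes w :: "real \<Rightarrow> 'a::real_inner"
  assumes deriv: "\<And>t. t \<in> T \<Longrightarrow> (w has_vector_derivative w' t) (at t within T)"
    and interval: "{t0..t1} \<subseteq> T"
    and dissip: "\<And>t. t0 < t \<Longrightarrow> t < t1 \<Longrightarrow> inner (w t) (w' t) \<le> \<beta> * (norm (w t))\<^sup>2"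
    and "t0 \<le> t1"
  shows "exp (- 2 * \<beta> * t1) * (norm (w t1))\<^sup>2 \<le> exp (- 2 * \<beta> * t0) * (norm (w t0))\<^sup>2"
proof -
  let ?g = "\<lambda>t. exp (- 2 * \<beta> * t) * inner (w t) (w t)"
  have "continuous_on T w"
    using deriv by (rule continuous_on_vector_derivative)
  then have "continuous_on {t0..t1} w"
    using interval by (rule continuous_on_subset)
  then have "continuous_on {t0..t1} ?g"
    by (intro continuous_intros)
  moreover have "\<exists>g'. (?g has_real_derivative g') (at t) \<and> g' \<le> 0" if t: "t0 < t" "t < t1" for t
  proof -
    have "(w has_vector_derivative w' t) (at t within {t0<..<t1})"
      using interval t by (intro has_vector_derivative_within_subset[OF deriv]) auto
    then have dw: "(w has_vector_derivative w' t) (at t)"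
      using at_within_open[of t "{t0<..<t1}"] t by simp
    have dg: "(?g has_real_derivative
        exp (- 2 * \<beta> * t) * (2 * inner (w t) (w' t) - 2 * \<beta> * inner (w t) (w t))) (at t)"
      using DERIV_mult[OF DERIV_fun_exp[OF DERIV_cmult_Id[of "- 2 * \<beta>"]]
          bounded_bilinear.has_vector_derivative[OF bounded_bilinear_inner dw dw,
            unfolded has_real_derivative_iff_has_vector_derivative[symmetric]]]
      by (simp add: inner_commute algebra_simps)
    have "2 * inner (w t) (w' t) - 2 * \<beta> * inner (w t) (w t) \<le> 0"
      using dissip[OF t] by (simp add: power2_norm_eq_inner)
    then show ?thesis using dg by (blast intro: mult_nonneg_nonpos[OF exp_ge_zero])
  qed
  ultimately have "?g t1 \<le> ?g t0"
    by (rule DERIV_nonpos_imp_decreasing_open[OF \<open>t0 \<le> t1\<close>, rotated])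
  then show ?thesis by (simp add: power2_norm_eq_inner)
qed

text \<open>Barrier argument: at the first time the norm reaches \<open>\<epsilon>\<close>, the weighted norm of
  \<open>exp_weighted_norm_antimono\<close> would have to exceed its initial value.\<close>
lemma norm_below_of_local_dissipation:
  fixes w :: "real \<Rightarrow> 'a::real_inner"
  assumes deriv: "\<And>t. t \<ge> 0 \<Longrightarrow> (w has_vector_derivative w' t) (at t within {0..})"
    and dissip: "\<And>t. t > 0 \<Longrightarrow> norm (w t) \<le> \<epsilon> \<Longrightarrow> inner (w t) (w' t) \<le> \<beta> * (norm (w t))\<^sup>2"
    and "\<beta> \<le> 0" and start: "norm (w 0) < \<epsilon>" and "t \<ge> 0"
  shows "norm (w t) < \<epsilon>"
proof (rule ccontr)
  assume "\<not> norm (w t) < \<epsilon>"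
  define T where "T = {0..t} \<inter> (\<lambda>s. norm (w s)) -` {\<epsilon>..}"
  have "continuous_on {0..} w"
    using deriv by (intro continuous_on_vector_derivative) simp
  then have "continuous_on {0..t} (\<lambda>s. norm (w s))"
    by (intro continuous_on_norm) (rule continuous_on_subset, auto)
  then have "closed T" unfolding T_def by (rule continuous_closed_preimage) auto
  moreover have "t \<in> T" using \<open>\<not> norm (w t) < \<epsilon>\<close> \<open>t \<ge> 0\<close> by (simp add: T_def)
  moreover have bdd: "bdd_below T" by (auto simp: T_def bdd_below_def)
  ultimately have "Inf T \<in> T" using closed_contains_Inf by blast
  then have first: "Inf T \<ge> 0" "norm (w (Inf T)) \<ge> \<epsilon>" by (auto simp: T_def)
  have "Inf T \<le> t" using \<open>t \<in> T\<close> bdd by (rule cInf_lower)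
  have below: "norm (w s) \<le> \<epsilon>" if "0 < s" "s < Inf T" for s
  proof (rule ccontr)
    assume "\<not> norm (w s) \<le> \<epsilon>"
    then have "s \<in> T" using that \<open>Inf T \<le> t\<close> by (simp add: T_def)
    then show False using cInf_lower[OF _ bdd] that by fastforce
  qed
  have "exp (- 2 * \<beta> * Inf T) * (norm (w (Inf T)))\<^sup>2 \<le> exp (- 2 * \<beta> * 0) * (norm (w 0))\<^sup>2"
  proof (rule exp_weighted_norm_antimono)
    show "(w has_vector_derivative w' s) (at s within {0..})" if "s \<in> {0..}" for s
      using deriv that by simp
  qed (use first below dissip in auto)
  then have "exp (- 2 * \<beta> * Inf T) * (norm (w (Inf T)))\<^sup>2 \<le> (norm (w 0))\<^sup>2"
    by (simp only: mult_zero_right exp_zero mult_1)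
  moreover have "1 \<le> exp (- 2 * \<beta> * Inf T)"
    using \<open>\<beta> \<le> 0\<close> first by (simp add: mult_nonpos_nonneg)
  then have "(norm (w (Inf T)))\<^sup>2 \<le> exp (- 2 * \<beta> * Inf T) * (norm (w (Inf T)))\<^sup>2"
    using mult_right_mono[of 1 _ "(norm (w (Inf T)))\<^sup>2"] by simp
  ultimately have "(norm (w (Inf T)))\<^sup>2 \<le> (norm (w 0))\<^sup>2" by linarith
  moreover have "(norm (w 0))\<^sup>2 < (norm (w (Inf T)))\<^sup>2"
    using start first by (intro power_strict_mono) auto
  ultimately show False by linarith
qed

lemma norm_exp_decay_of_local_dissipation:
  fixes w :: "real \<Rightarrow> 'a::real_inner"
  assumes deriv: "\<And>t. t \<ge> 0 \<Longrightarrow> (w has_vector_derivative w' t) (at t within {0..})"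
    and dissip: "\<And>t. t > 0 \<Longrightarrow> norm (w t) \<le> \<epsilon> \<Longrightarrow> inner (w t) (w' t) \<le> \<beta> * (norm (w t))\<^sup>2"
    and "\<beta> \<le> 0" and start: "norm (w 0) < \<epsilon>" and "t \<ge> 0"
  shows "norm (w t) \<le> exp (\<beta> * t) * norm (w 0)"
proof -
  have "exp (- 2 * \<beta> * t) * (norm (w t))\<^sup>2 \<le> exp (- 2 * \<beta> * 0) * (norm (w 0))\<^sup>2"
  proof (rule exp_weighted_norm_antimono)
    show "(w has_vector_derivative w' s) (at s within {0..})" if "s \<in> {0..}" for s
      using deriv that by simp
    show "inner (w s) (w' s) \<le> \<beta> * (norm (w s))\<^sup>2" if "0 < s" for s
      using norm_below_of_local_dissipation[OF deriv dissip \<open>\<beta> \<le> 0\<close> start] that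
      by (simp add: dissip less_imp_le)
  qed (use \<open>t \<ge> 0\<close> in auto)
  then have decay: "exp (- 2 * \<beta> * t) * (norm (w t))\<^sup>2 \<le> (norm (w 0))\<^sup>2" by simp
  have "(exp (\<beta> * t))\<^sup>2 * exp (- 2 * \<beta> * t) = 1"
    by (simp add: power2_eq_square flip: exp_add)
  then have "(norm (w t))\<^sup>2 = (exp (\<beta> * t))\<^sup>2 * (exp (- 2 * \<beta> * t) * (norm (w t))\<^sup>2)"
    by (metis mult.assoc mult_1)
  also have "\<dots> \<le> (exp (\<beta> * t))\<^sup>2 * (norm (w 0))\<^sup>2"
    using decay by (rule mult_left_mono) simp
  finally have "(norm (w t))\<^sup>2 \<le> (exp (\<beta> * t) * norm (w 0))\<^sup>2"
    by (simp add: power_mult_distrib)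
  then show ?thesis by (rule power2_le_imp_le) simp
qed

lemma le_mult_infdist:
  fixes x :: "'a::metric_space"
  assumes "S \<noteq> {}" "infdist x S < \<delta>" "C \<ge> 0"
    and bound: "\<And>s. s \<in> S \<Longrightarrow> dist x s < \<delta> \<Longrightarrow> y \<le> C * dist x s"
  shows "y \<le> C * infdist x S"
proof (rule field_le_epsilon)
  fix e :: real assume "e > 0"
  define \<eta> where "\<eta> = min (e / (C + 1)) (\<delta> - infdist x S)"
  have "\<eta> > 0" using \<open>e > 0\<close> assms by (simp add: \<eta>_def)
  moreover have "infdist x S = (INF s\<in>S. dist x s)" using assms(1) by (rule infdist_notempty)
  ultimately have "(INF s\<in>S. dist x s) < infdist x S + \<eta>" by simp
  then obtain s where "s \<in> S" and s: "dist x s < infdist x S + \<eta>"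
    using assms(1) by (subst (asm) cINF_less_iff) (auto intro: bdd_belowI[where m=0])
  moreover have "\<eta> \<le> \<delta> - infdist x S" "\<eta> \<le> e / (C + 1)" by (simp_all add: \<eta>_def)
  ultimately have "y \<le> C * dist x s" and "dist x s \<le> infdist x S + e / (C + 1)"
    using bound s by auto
  then have "y \<le> C * (infdist x S + e / (C + 1))"
    using \<open>C \<ge> 0\<close> by (meson mult_left_mono order.trans)
  also have "\<dots> \<le> C * infdist x S + e"
    using \<open>C \<ge> 0\<close> \<open>e > 0\<close> by (simp add: distrib_left divide_le_eq)
  finally show "y \<le> C * infdist x S + e" .
qed

section \<open>Spanning trees and the intra-cluster Jacobian\<close>

lemma connected_on_const:
  assumes "connected_on P E" "i \<in> P" "j \<in> P"
    and edge: "\<And>p q. (p, q) \<in> E \<Longrightarrow> p \<in> P \<Longrightarrow> q \<in> P \<Longrightarrow> f p = f q"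
  shows "f i = f j"
proof -
  have "(i, j) \<in> ((E \<union> E\<inverse>) \<inter> (P \<times> P))\<^sup>*" using assms(1-3) by (simp add: connected_on_def)
  then show ?thesis
  proof (induction rule: rtrancl_induct)
    case (step y z)
    then show ?case using edge[of y z] edge[of z y] by auto
  qed simp
qed

lemma connected_on_crossing_edge:
  assumes "connected_on UNIV E" "P1 \<inter> P2 = {}" "P1 \<union> P2 = UNIV" "i1 \<in> P1" "i2 \<in> P2"
  shows "\<exists>i\<in>P1. \<exists>k\<in>P2. (i, k) \<in> E \<or> (k, i) \<in> E"
proof (rule ccontr)
  assume no_crossing: "\<not> ?thesis"
  have "(i1 \<in> P1) = (i2 \<in> P1)"
  proof (rule connected_on_const[OF assms(1)])
    fix p q assume "(p, q) \<in> E"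
    then show "(p \<in> P1) = (q \<in> P1)" using no_crossing assms(3) by blast
  qed auto
  then show False using assms(2,4,5) by blast
qed

lemma path_diff_eq_potential:
  fixes x :: "real^('n::finite \<times> 'n)" and \<psi> :: "'n \<Rightarrow> real"
  assumes "connected_on P E" "E \<subseteq> EE"
    and increments: "\<And>p q. (p, q) \<in> EE \<Longrightarrow> x $ (p, q) = \<psi> q - \<psi> p"
    and "u \<in> P" "w \<in> P"
  shows "path_diff EE x u w = \<psi> w - \<psi> u"
proof -
  have "\<exists>r \<phi>::'n \<Rightarrow> real. (\<forall>(p, q)\<in>EE. \<phi> q - \<phi> p = x $ (p, q)) \<and> r = \<phi> w - \<phi> u"
    using increments by (intro exI[of _ "\<psi> w - \<psi> u"] exI[of _ \<psi>]) auto
  from someI_ex[OF this] obtain \<phi> where \<phi>: "\<forall>(p, q)\<in>EE. \<phi> q - \<phi> p = x $ (p, q)"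
    and "path_diff EE x u w = \<phi> w - \<phi> u"
    unfolding path_diff_def by blast
  moreover have "\<phi> u - \<psi> u = \<phi> w - \<psi> w"
  proof (rule connected_on_const[OF assms(1,4,5)])
    fix p q assume "(p, q) \<in> E"
    then have "(p, q) \<in> EE" using assms(2) by blast
    then show "\<phi> p - \<psi> p = \<phi> q - \<psi> q"
      using \<phi> increments[of p q] by auto
  qed
  ultimately show ?thesis by simp
qed

lemma has_real_derivative_component_along:
  fixes G :: "'a::real_normed_vector \<Rightarrow> real^'m"
  assumes "(G has_derivative J) (at 0)"
  shows "((\<lambda>t. G (t *\<^sub>R v) $ e) has_real_derivative J v $ e) (at 0)"
proof -
  have line: "((\<lambda>t. t *\<^sub>R v) has_derivative (\<lambda>t. t *\<^sub>R v)) (at 0)"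
    by (intro derivative_eq_intros) auto
  have "((\<lambda>t. G (t *\<^sub>R v)) has_derivative (\<lambda>t. J (t *\<^sub>R v))) (at 0)"
    using has_derivative_compose[OF line, of G J] assms by simp
  then have "((\<lambda>t. G (t *\<^sub>R v) $ e) has_derivative (\<lambda>t. J (t *\<^sub>R v) $ e)) (at 0)"
    by (rule bounded_linear.has_derivative[OF bounded_linear_vec_nth])
  moreover have "(\<lambda>t. J (t *\<^sub>R v) $ e) = (*) (J v $ e)"
    using linear_scale[OF has_derivative_linear[OF assms]] by (simp add: fun_eq_iff mult.commute)
  ultimately show ?thesis
    by (simp add: has_field_derivative_def)
qed

text \<open>Differentiating the intra-cluster vector field along the direction induced by a potential
  \<open>d\<close> on the tree edges shows that \<open>\<Sum>z. a u z (d z - d u) - \<alpha> d u\<close> takes the same value at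
  both ends of every tree edge; it is therefore constant on the cluster, and it sums to zero
  when \<open>d\<close> does.\<close>
lemma intra_laplacian_of_jacobian:
  fixes a :: "'n::finite \<Rightarrow> 'n \<Rightarrow> real" and G :: "real^('n \<times> 'n) \<Rightarrow> real^('n \<times> 'n)"
  assumes sym: "\<And>i j. a i j = a j i"
    and conn: "connected_on P E" and sub: "E \<subseteq> EE" and EP: "\<And>i j. (i, j) \<in> E \<Longrightarrow> i \<in> P \<and> j \<in> P"
    and G: "\<And>x i j. (i, j) \<in> E \<Longrightarrow> G x $ (i, j) =
        (\<Sum>z\<in>P. a j z * sin (path_diff EE x j z) - a i z * sin (path_diff EE x i z))"
    and J: "(G has_derivative J) (at 0)"
    and J_scalar: "\<And>v. (\<forall>e. e \<notin> EE \<longrightarrow> v $ e = 0) \<Longrightarrow> J v = \<alpha> *\<^sub>R v"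
    and zero_sum: "(\<Sum>z\<in>P. d z) = 0" and "j \<in> P"
  shows "(\<Sum>z\<in>P. a j z * (d z - d j)) = \<alpha> * d j"
proof -
  define v :: "real^('n \<times> 'n)" where "v = (\<chi> e. if e \<in> EE then d (snd e) - d (fst e) else 0)"
  define h where "h u = (\<Sum>z\<in>P. a u z * (d z - d u)) - \<alpha> * d u" for u
  have edge: "h p = h q" if pq: "(p, q) \<in> E" for p q
  proof -
    have "path_diff EE (t *\<^sub>R v) u w = t * d w - t * d u" if "u \<in> P" "w \<in> P" for t u w
      by (rule path_diff_eq_potential[OF conn sub _ that]) (simp add: v_def algebra_simps)
    then have along: "(\<lambda>t. G (t *\<^sub>R v) $ (p, q)) =
        (\<lambda>t. \<Sum>z\<in>P. a q z * sin (t * (d z - d q)) - a p z * sin (t * (d z - d p)))"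
      using G[OF pq] EP[OF pq] by (simp add: right_diff_distrib cong: sum.cong)
    have "((\<lambda>t. G (t *\<^sub>R v) $ (p, q))
        has_real_derivative (\<Sum>z\<in>P. a q z * (d z - d q) - a p z * (d z - d p))) (at 0)"
      unfolding along
      by (rule DERIV_cong, (auto intro!: derivative_eq_intros)[1]) (simp add: mult.commute)
    moreover have "J v = \<alpha> *\<^sub>R v" by (rule J_scalar) (simp add: v_def)
    then have "((\<lambda>t. G (t *\<^sub>R v) $ (p, q)) has_real_derivative \<alpha> * (d q - d p)) (at 0)"
      using has_real_derivative_component_along[OF J, of v "(p, q)"] pq sub by (auto simp: v_def)
    ultimately have "\<alpha> * (d q - d p) = (\<Sum>z\<in>P. a q z * (d z - d q) - a p z * (d z - d p))"
      by (rule DERIV_unique[rotated])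
    then have "\<alpha> * (d q - d p) = (\<Sum>z\<in>P. a q z * (d z - d q)) - (\<Sum>z\<in>P. a p z * (d z - d p))"
      by (simp add: sum_subtractf)
    then show ?thesis by (simp add: h_def algebra_simps)
  qed
  have const: "h u = h j" if "u \<in> P" for u
    by (rule connected_on_const[OF conn that \<open>j \<in> P\<close>]) (rule edge)
  have "(\<Sum>u\<in>P. h u) =
      (\<Sum>u\<in>P. \<Sum>z\<in>P. a u z * d z) - (\<Sum>u\<in>P. \<Sum>z\<in>P. a u z * d u) - \<alpha> * (\<Sum>u\<in>P. d u)"
    by (simp add: h_def sum_subtractf sum_distrib_left sum.distrib algebra_simps)
  also have "(\<Sum>u\<in>P. \<Sum>z\<in>P. a u z * d z) = (\<Sum>u\<in>P. \<Sum>z\<in>P. a u z * d u)"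
    by (subst sum.swap) (simp add: sym)
  finally have "(\<Sum>u\<in>P. h u) = 0" using zero_sum by simp
  moreover have "(\<Sum>u\<in>P. h u) = real (card P) * h j" using const by simp
  moreover have "card P > 0" using \<open>j \<in> P\<close> by (auto simp: card_gt_0_iff)
  ultimately show ?thesis using \<open>j \<in> P\<close> by (auto simp: h_def)
qed

lemma F_intra_intra_laplacian:
  fixes a :: "'n::{finite,linorder} \<Rightarrow> 'n \<Rightarrow> real"
  assumes sym: "\<And>i j. a i j = a j i" and "P1 \<inter> P2 = {}"
    and T1: "spanning_tree a P1 E1" and T2: "spanning_tree a P2 E2"
    and J: "(F_intra a P1 P2 E1 E2 has_derivative J) (at 0)"
    and J_scalar: "\<And>v. (\<forall>e. e \<notin> E1 \<union> E2 \<longrightarrow> v $ e = 0) \<Longrightarrow> J v = \<alpha> *\<^sub>R v"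
    and "P \<in> {P1, P2}" "(\<Sum>z\<in>P. d z) = 0" "j \<in> P"
  shows "(\<Sum>z\<in>P. a j z * (d z - d j)) = \<alpha> * d j"
proof -
  have E1: "E1 \<subseteq> {(i, j). i \<in> P1 \<and> j \<in> P1 \<and> i < j \<and> a i j > 0}" "connected_on P1 E1"
    and E2: "E2 \<subseteq> {(i, j). i \<in> P2 \<and> j \<in> P2 \<and> i < j \<and> a i j > 0}" "connected_on P2 E2"
    using T1 T2 by (auto simp: spanning_tree_def)
  have "E1 \<inter> E2 = {}" using E1(1) E2(1) \<open>P1 \<inter> P2 = {}\<close> by blast
  have F1: "F_intra a P1 P2 E1 E2 x $ (i, j) =
      (\<Sum>z\<in>P1. a j z * sin (path_diff (E1 \<union> E2) x j z) - a i z * sin (path_diff (E1 \<union> E2) x i z))"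
    if "(i, j) \<in> E1" for x i j
    using that by (simp add: F_intra_def)
  have F2: "F_intra a P1 P2 E1 E2 x $ (i, j) =
      (\<Sum>z\<in>P2. a j z * sin (path_diff (E1 \<union> E2) x j z) - a i z * sin (path_diff (E1 \<union> E2) x i z))"
    if "(i, j) \<in> E2" for x i j
    using that \<open>E1 \<inter> E2 = {}\<close> by (auto simp: F_intra_def)
  from \<open>P \<in> {P1, P2}\<close> consider "P = P1" | "P = P2" by blast
  then show ?thesis
  proof cases
    case 1
    have "(\<Sum>z\<in>P1. a j z * (d z - d j)) = \<alpha> * d j"
      by (rule intra_laplacian_of_jacobian[OF sym E1(2) _ _ F1 J J_scalar])
        (use E1(1) 1 assms(8,9) in auto)
    then show ?thesis using 1 by simp
  next
    case 2
    have "(\<Sum>z\<in>P2. a j z * (d z - d j)) = \<alpha> * d j"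
      by (rule intra_laplacian_of_jacobian[OF sym E2(2) _ _ F2 J J_scalar])
        (use E2(1) 2 assms(8,9) in auto)
    then show ?thesis using 2 by simp
  qed
qed

section \<open>Periodicity of the Kuramoto vector field\<close>

definition phase_lattice :: "(real^'n) set" where
  "phase_lattice = {k. \<forall>i. \<exists>m::int. k$i = 2 * pi * of_int m}"

lemma phase_lattice_diff:
  assumes "k \<in> phase_lattice"
  shows "\<exists>m::int. k$j - k$i = 2 * pi * of_int m"
proof -
  obtain mi mj :: int where "k$i = 2 * pi * of_int mi" "k$j = 2 * pi * of_int mj"
    using assms unfolding phase_lattice_def by blast
  then show ?thesis by (intro exI[of _ "mj - mi"]) (simp add: algebra_simps)
qed

lemma kuramoto_diff_lattice:
  assumes "k \<in> phase_lattice"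
  shows "kuramoto a \<omega> (\<theta> - k) = kuramoto a \<omega> \<theta>"
proof -
  have "sin ((\<theta> - k) $ j - (\<theta> - k) $ i) = sin (\<theta> $ j - \<theta> $ i)" for i j
  proof -
    obtain m :: int where "k $ i - k $ j = 2 * pi * of_int m"
      using phase_lattice_diff[OF assms] by blast
    then have shift: "(\<theta> - k) $ j - (\<theta> - k) $ i = (\<theta> $ j - \<theta> $ i) + 2 * pi * of_int m"
      by (simp add: algebra_simps)
    show ?thesis unfolding shift sin_add cos_int_2pin sin_int_2pin by simp
  qed
  then show ?thesis by (simp add: kuramoto_def)
qed

section \<open>Reduced dynamics of two clusters\<close>

definition average :: "'a set \<Rightarrow> ('a \<Rightarrow> real) \<Rightarrow> real" where
  "average P g = sum g P / real (card P)"

lemma average_add: "average P (\<lambda>i. f i + g i) = average P f + average P g"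
  by (simp add: average_def sum.distrib add_divide_distrib)

lemma average_scale: "average P (\<lambda>i. c * f i) = c * average P f"
  by (simp add: average_def sum_distrib_left)

lemma average_const_on:
  "finite P \<Longrightarrow> P \<noteq> {} \<Longrightarrow> (\<And>i. i \<in> P \<Longrightarrow> g i = c) \<Longrightarrow> average P g = c"
  by (simp add: average_def)

lemma abs_average_le:
  assumes "finite P" "P \<noteq> {}" "\<And>i. i \<in> P \<Longrightarrow> \<bar>g i\<bar> \<le> B"
  shows "\<bar>average P g\<bar> \<le> B"
proof -
  have "\<bar>sum g P\<bar> \<le> real (card P) * B"
    using order_trans[OF sum_abs sum_mono[of P _ "\<lambda>_. B"]] assms(3) by simp
  then show ?thesis
    using assms(1,2) by (simp add: average_def abs_divide divide_le_eq mult.commute card_gt_0_iff)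
qed

lemma sum_diff_average:
  "finite P \<Longrightarrow> P \<noteq> {} \<Longrightarrow> (\<Sum>i\<in>P. g i - average P g) = 0"
  by (simp add: average_def sum_subtractf)

text \<open>(A3) enters as the constant cross-cluster row sums \<open>s1\<close>, \<open>s2\<close>, and the hypothesis on the
  intra-cluster Jacobian as the intra-cluster Laplacian acting as \<open>\<alpha>\<close> on vectors of mean zero.\<close>
locale two_cluster_kuramoto =
  fixes a :: "'n::finite \<Rightarrow> 'n \<Rightarrow> real" and P1 P2 :: "'n set" and \<omega> :: "'n \<Rightarrow> real"
    and \<omega>1 \<omega>2 \<alpha> s1 s2 :: real
  assumes sym: "\<And>i j. a i j = a j i" and nonneg: "\<And>i j. a i j \<ge> 0" and noloop: "\<And>i. a i i = 0"
    and disj: "P1 \<inter> P2 = {}" and cover: "P1 \<union> P2 = UNIV" and ne1: "P1 \<noteq> {}" and ne2: "P2 \<noteq> {}"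
    and freq1: "\<And>i. i \<in> P1 \<Longrightarrow> \<omega> i = \<omega>1" and freq2: "\<And>i. i \<in> P2 \<Longrightarrow> \<omega> i = \<omega>2"
    and row1: "\<And>i. i \<in> P1 \<Longrightarrow> (\<Sum>k\<in>P2. a i k) = s1"
    and row2: "\<And>i. i \<in> P2 \<Longrightarrow> (\<Sum>k\<in>P1. a i k) = s2"
    and intra_laplacian: "\<And>P d j. P \<in> {P1, P2} \<Longrightarrow> (\<Sum>z\<in>P. d z) = 0 \<Longrightarrow> j \<in> P \<Longrightarrow>
        (\<Sum>z\<in>P. a j z * (d z - d j)) = \<alpha> * d j"
    and gap: "\<omega>2 - \<omega>1 > s1 + s2" and cross_pos: "s1 + s2 > 0" and alpha_neg: "\<alpha> < 0"
begin

definition cluster :: "'n \<Rightarrow> 'n set" where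
  "cluster i = (if i \<in> P1 then P1 else P2)"

definition centered :: "real^'n \<Rightarrow> real^'n" where
  "centered \<theta> = (\<chi> i. \<theta>$i - average (cluster i) (\<lambda>j. \<theta>$j))"

definition phase_gap :: "real^'n \<Rightarrow> real" where
  "phase_gap \<theta> = average P2 (\<lambda>j. \<theta>$j) - average P1 (\<lambda>j. \<theta>$j)"

definition cross_coupling :: "real^'n \<Rightarrow> real^'n" where
  "cross_coupling u = (\<chi> i. \<Sum>z\<in>UNIV - cluster i. a i z * (u$z - u$i))"

definition cross_weight :: "'n \<Rightarrow> real" where
  "cross_weight i = (if i \<in> P1 then s1 else s2)"

definition oriented :: "real \<Rightarrow> 'n \<Rightarrow> real" where
  "oriented \<phi> i = (if i \<in> P1 then \<phi> else - \<phi>)"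

definition cluster_offset :: "real^'n \<Rightarrow> 'n \<Rightarrow> 'n \<Rightarrow> real" where
  "cluster_offset \<theta> i j = (if j \<in> cluster i then 0 else oriented (phase_gap \<theta>) i)"

definition coupling_remainder :: "real^'n \<Rightarrow> 'n \<Rightarrow> real" where
  "coupling_remainder \<theta> i =
    (\<Sum>j\<in>UNIV. a i j * sin_remainder (cluster_offset \<theta> i j) ((centered \<theta>)$j - (centered \<theta>)$i))"

abbreviation f :: "real^'n \<Rightarrow> real^'n" where "f \<equiv> kuramoto a \<omega>"

lemma compl_P1: "UNIV - P1 = P2" and compl_P2: "UNIV - P2 = P1" and notin_P1: "j \<in> P2 \<Longrightarrow> j \<notin> P1"
  using disj cover by blast+

lemma cluster_cases: "cluster i = P1 \<and> i \<in> P1 \<or> cluster i = P2 \<and> i \<in> P2"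
  using cover by (auto simp: cluster_def)

lemma cluster_in: "cluster i \<in> {P1, P2}" and in_cluster: "i \<in> cluster i"
  using cluster_cases by auto

lemma cluster_eq: "P \<in> {P1, P2} \<Longrightarrow> i \<in> P \<Longrightarrow> cluster i = P"
  using disj by (auto simp: cluster_def)

lemma clusters_finite_nonempty: "P \<in> {P1, P2} \<Longrightarrow> finite P \<and> P \<noteq> {}"
  using ne1 ne2 by auto

lemma phase_diff_split: "\<theta>$j - \<theta>$i = cluster_offset \<theta> i j + ((centered \<theta>)$j - (centered \<theta>)$i)"
  using disj cover by (auto simp: cluster_offset_def cluster_def centered_def oriented_def phase_gap_def)

lemma sum_centered: "P \<in> {P1, P2} \<Longrightarrow> (\<Sum>j\<in>P. (centered \<theta>)$j) = 0"
  using sum_diff_average[of P "\<lambda>j. \<theta>$j"] clusters_finite_nonempty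
  by (simp add: centered_def cluster_eq cong: sum.cong)

lemma row_sum_cross: "(\<Sum>k\<in>UNIV - cluster i. a i k) = cross_weight i"
  using cluster_cases[of i] row1 row2 compl_P1 compl_P2 by (auto simp: cross_weight_def)

lemma sum_split_cluster: "(\<Sum>j\<in>UNIV. g j) = (\<Sum>j\<in>cluster i. g j) + (\<Sum>j\<in>UNIV - cluster i. g j)"
  by (simp add: sum.subset_diff[of "cluster i" UNIV g] add.commute)

lemma kuramoto_decomposition:
  "(f \<theta>)$i = \<omega> i + cross_weight i * sin (oriented (phase_gap \<theta>) i) + \<alpha> * (centered \<theta>)$i
     + cos (phase_gap \<theta>) * (cross_coupling (centered \<theta>))$i + coupling_remainder \<theta> i"
proof -
  let ?u = "centered \<theta>" and ?b = "cluster_offset \<theta> i"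
  have "(\<Sum>j\<in>UNIV - {i}. a i j * sin (\<theta>$j - \<theta>$i)) = (\<Sum>j\<in>UNIV. a i j * sin (\<theta>$j - \<theta>$i))"
    by (simp add: sum.remove[of UNIV i] noloop)
  also have "\<dots> = (\<Sum>j\<in>UNIV. a i j * sin (?b j)) + (\<Sum>j\<in>UNIV. a i j * (cos (?b j) * (?u$j - ?u$i)))
      + coupling_remainder \<theta> i"
    unfolding coupling_remainder_def sin_remainder_def phase_diff_split[of \<theta> _ i]
    by (simp add: sum.distrib[symmetric] algebra_simps)
  also have "(\<Sum>j\<in>UNIV. a i j * sin (?b j)) = cross_weight i * sin (oriented (phase_gap \<theta>) i)"
    using sum_split_cluster[where g="\<lambda>j. a i j * sin (?b j)" and i=i] row_sum_cross[of i]
    by (simp add: cluster_offset_def sum_distrib_right[symmetric])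
  also have "(\<Sum>j\<in>UNIV. a i j * (cos (?b j) * (?u$j - ?u$i))) =
      \<alpha> * ?u$i + cos (phase_gap \<theta>) * (cross_coupling ?u)$i"
  proof -
    have "(\<Sum>j\<in>cluster i. a i j * (cos (?b j) * (?u$j - ?u$i))) = \<alpha> * ?u$i"
      using intra_laplacian[OF cluster_in sum_centered[OF cluster_in] in_cluster]
      by (simp add: cluster_offset_def)
    moreover have "cos (oriented (phase_gap \<theta>) i) = cos (phase_gap \<theta>)"
      by (simp add: oriented_def)
    then have "(\<Sum>j\<in>UNIV - cluster i. a i j * (cos (?b j) * (?u$j - ?u$i))) =
        cos (phase_gap \<theta>) * (cross_coupling ?u)$i"
      by (simp add: cluster_offset_def cross_coupling_def sum_distrib_left algebra_simps)
    ultimately show ?thesis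
      using sum_split_cluster[where g="\<lambda>j. a i j * (cos (?b j) * (?u$j - ?u$i))" and i=i] by simp
  qed
  finally show ?thesis by (simp add: kuramoto_def algebra_simps)
qed

lemma sum_cross_coupling_P1:
  "(\<Sum>i\<in>P1. (cross_coupling u)$i) = s2 * (\<Sum>z\<in>P2. u$z) - s1 * (\<Sum>i\<in>P1. u$i)"
proof -
  have "(\<Sum>i\<in>P1. (cross_coupling u)$i) =
      (\<Sum>i\<in>P1. \<Sum>z\<in>P2. a i z * u$z) - (\<Sum>i\<in>P1. u$i * (\<Sum>z\<in>P2. a i z))"
    by (simp add: cross_coupling_def cluster_def compl_P1 sum_subtractf sum_distrib_left algebra_simps)
  also have "(\<Sum>i\<in>P1. \<Sum>z\<in>P2. a i z * u$z) = (\<Sum>z\<in>P2. u$z * (\<Sum>i\<in>P1. a z i))"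
    by (subst sum.swap) (simp add: sum_distrib_left sym mult.commute)
  finally show ?thesis by (simp add: row1 row2 sum_distrib_left mult.commute cong: sum.cong)
qed

lemma sum_cross_coupling_P2:
  "(\<Sum>i\<in>P2. (cross_coupling u)$i) = s1 * (\<Sum>z\<in>P1. u$z) - s2 * (\<Sum>i\<in>P2. u$i)"
proof -
  have "(\<Sum>i\<in>P2. (cross_coupling u)$i) =
      (\<Sum>i\<in>P2. \<Sum>z\<in>P1. a i z * u$z) - (\<Sum>i\<in>P2. u$i * (\<Sum>z\<in>P1. a i z))"
    by (simp add: cross_coupling_def cluster_def notin_P1 compl_P2 sum_subtractf sum_distrib_left
        algebra_simps cong: sum.cong)
  also have "(\<Sum>i\<in>P2. \<Sum>z\<in>P1. a i z * u$z) = (\<Sum>z\<in>P1. u$z * (\<Sum>i\<in>P2. a z i))"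
    by (subst sum.swap) (simp add: sum_distrib_left sym mult.commute)
  finally show ?thesis by (simp add: row1 row2 sum_distrib_left mult.commute cong: sum.cong)
qed

lemma sum_cross_coupling_centered: "P \<in> {P1, P2} \<Longrightarrow> (\<Sum>j\<in>P. (cross_coupling (centered \<theta>))$j) = 0"
  using sum_cross_coupling_P1 sum_cross_coupling_P2 sum_centered by auto

lemma average_kuramoto_cluster:
  "average (cluster i) (\<lambda>j. (f \<theta>)$j) =
     \<omega> i + cross_weight i * sin (oriented (phase_gap \<theta>) i) + average (cluster i) (coupling_remainder \<theta>)"
proof -
  let ?P = "cluster i"
  have "(f \<theta>)$j = (\<omega> i + cross_weight i * sin (oriented (phase_gap \<theta>) i)) + \<alpha> * (centered \<theta>)$j
      + cos (phase_gap \<theta>) * (cross_coupling (centered \<theta>))$j + coupling_remainder \<theta> j" if "j \<in> ?P" for j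
    using that cluster_cases[of i] freq1 freq2 notin_P1 disj
    by (auto simp: kuramoto_decomposition cross_weight_def oriented_def)
  then have "(\<Sum>j\<in>?P. (f \<theta>)$j) =
      real (card ?P) * (\<omega> i + cross_weight i * sin (oriented (phase_gap \<theta>) i)) + (\<Sum>j\<in>?P. coupling_remainder \<theta> j)"
    using sum_centered[OF cluster_in] sum_cross_coupling_centered[OF cluster_in]
    by (simp add: sum.distrib sum_distrib_left[symmetric])
  then show ?thesis
    using clusters_finite_nonempty[OF cluster_in, of i] by (simp add: average_def add_divide_distrib)
qed

lemma centered_kuramoto:
  "(centered (f \<theta>))$i = \<alpha> * (centered \<theta>)$i + cos (phase_gap \<theta>) * (cross_coupling (centered \<theta>))$i
     + (coupling_remainder \<theta> i - average (cluster i) (coupling_remainder \<theta>))"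
  using average_kuramoto_cluster[of i \<theta>] by (simp add: centered_def kuramoto_decomposition)

lemma phase_gap_kuramoto:
  "phase_gap (f \<theta>) = (\<omega>2 - \<omega>1) - (s1 + s2) * sin (phase_gap \<theta>)
     + (average P2 (coupling_remainder \<theta>) - average P1 (coupling_remainder \<theta>))"
proof -
  obtain i1 i2 where "i1 \<in> P1" "i2 \<in> P2" using ne1 ne2 by blast
  then have "average P1 (\<lambda>j. (f \<theta>)$j) = \<omega>1 + s1 * sin (phase_gap \<theta>) + average P1 (coupling_remainder \<theta>)"
    and "average P2 (\<lambda>j. (f \<theta>)$j) = \<omega>2 - s2 * sin (phase_gap \<theta>) + average P2 (coupling_remainder \<theta>)"
    using average_kuramoto_cluster[of i1 \<theta>] average_kuramoto_cluster[of i2 \<theta>]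
      cluster_eq[of P1 i1] cluster_eq[of P2 i2] freq1 freq2 notin_P1
    by (simp_all add: cross_weight_def oriented_def)
  then show ?thesis by (simp add: phase_gap_def[of "f \<theta>"] algebra_simps)
qed

definition total_weight :: "real" where
  "total_weight = (\<Sum>i\<in>UNIV. \<Sum>j\<in>UNIV. a i j)"

lemma total_weight_nonneg: "total_weight \<ge> 0"
  unfolding total_weight_def by (intro sum_nonneg) (simp add: nonneg)

lemma abs_coupling_remainder_le: "\<bar>coupling_remainder \<theta> i\<bar> \<le> 4 * total_weight * (norm (centered \<theta>))\<^sup>2"
proof -
  let ?u = "centered \<theta>"
  have "(?u$j - ?u$i)\<^sup>2 \<le> (2 * norm ?u)\<^sup>2" for j
    using component_le_norm_cart[of ?u j] component_le_norm_cart[of ?u i]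
    by (intro power2_le_iff_abs_le[THEN iffD2]) auto
  then have "\<bar>sin_remainder (cluster_offset \<theta> i j) (?u$j - ?u$i)\<bar> \<le> 4 * (norm ?u)\<^sup>2" for j
    using abs_sin_remainder_le order_trans by (simp add: power_mult_distrib) blast
  then have "\<bar>a i j * sin_remainder (cluster_offset \<theta> i j) (?u$j - ?u$i)\<bar> \<le> a i j * (4 * (norm ?u)\<^sup>2)" for j
    by (simp add: abs_mult nonneg mult_left_mono)
  then have "\<bar>coupling_remainder \<theta> i\<bar> \<le> (\<Sum>j\<in>UNIV. a i j) * (4 * (norm ?u)\<^sup>2)"
    unfolding coupling_remainder_def sum_distrib_right by (rule order_trans[OF sum_abs sum_mono])
  also have "\<dots> \<le> total_weight * (4 * (norm ?u)\<^sup>2)"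
    unfolding total_weight_def
    by (intro mult_right_mono member_le_sum) (auto intro: sum_nonneg nonneg)
  finally show ?thesis by simp
qed

lemma abs_average_coupling_remainder_le:
  "P \<in> {P1, P2} \<Longrightarrow> \<bar>average P (coupling_remainder \<theta>)\<bar> \<le> 4 * total_weight * (norm (centered \<theta>))\<^sup>2"
  using clusters_finite_nonempty by (intro abs_average_le abs_coupling_remainder_le) auto

definition centered_remainder :: "real^'n \<Rightarrow> real^'n" where
  "centered_remainder \<theta> =
    centered (f \<theta>) - (\<alpha> *\<^sub>R centered \<theta> + cos (phase_gap \<theta>) *\<^sub>R cross_coupling (centered \<theta>))"

definition centered_remainder_const :: "real" where
  "centered_remainder_const = 8 * total_weight * real CARD('n)"

lemma centered_remainder_const_nonneg: "centered_remainder_const \<ge> 0"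
  using total_weight_nonneg by (simp add: centered_remainder_const_def)

lemma norm_centered_remainder_le:
  "norm (centered_remainder \<theta>) \<le> centered_remainder_const * (norm (centered \<theta>))\<^sup>2"
proof -
  have "\<bar>(centered_remainder \<theta>)$i\<bar> \<le> 8 * total_weight * (norm (centered \<theta>))\<^sup>2" for i
    using abs_coupling_remainder_le[of \<theta> i] abs_average_coupling_remainder_le[OF cluster_in, of i \<theta>]
    by (simp add: centered_remainder_def centered_kuramoto)
  then have "norm (centered_remainder \<theta>) \<le> (\<Sum>i\<in>(UNIV::'n set). 8 * total_weight * (norm (centered \<theta>))\<^sup>2)"
    by (intro order_trans[OF norm_le_l1_cart sum_mono])
  then show ?thesis by (simp add: centered_remainder_const_def mult_ac)
qed

lemma abs_phase_gap_remainder_le: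
  "\<bar>phase_gap (f \<theta>) - ((\<omega>2 - \<omega>1) - (s1 + s2) * sin (phase_gap \<theta>))\<bar>
     \<le> 8 * total_weight * (norm (centered \<theta>))\<^sup>2"
  using abs_average_coupling_remainder_le[of P1 \<theta>] abs_average_coupling_remainder_le[of P2 \<theta>]
  by (simp add: phase_gap_kuramoto)

lemma bounded_linear_centered: "bounded_linear centered"
  by (intro linear_conv_bounded_linear[THEN iffD1] linearI)
    (simp_all add: centered_def vec_eq_iff average_add average_scale algebra_simps)

lemma bounded_linear_phase_gap: "bounded_linear phase_gap"
  by (intro linear_conv_bounded_linear[THEN iffD1] linearI)
    (simp_all add: phase_gap_def average_add average_scale algebra_simps)

lemma bounded_linear_cross_coupling: "bounded_linear cross_coupling"
  by (intro linear_conv_bounded_linear[THEN iffD1] linearI)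
    (simp_all add: cross_coupling_def vec_eq_iff sum.distrib[symmetric] sum_distrib_left algebra_simps)

subsection \<open>The gauge transformation\<close>

definition cross_coupling_endo :: "(real^'n) endo" where
  "cross_coupling_endo = Abs_endo (Blinfun cross_coupling)"

lemma endo_apply_cross_coupling_endo: "endo_apply cross_coupling_endo u = cross_coupling u"
  by (simp add: cross_coupling_endo_def endo_apply_Abs_Blinfun bounded_linear_cross_coupling)

definition omega_bar :: "real" where
  "omega_bar = \<omega>2 - \<omega>1"

definition a_bar :: "real" where
  "a_bar = s1 + s2"

text \<open>Along a trajectory the phase gap
  obeys \<open>\<phi>' \<approx> \<omega>bar - abar sin \<phi> > 0\<close>, so \<open>phase_gauge \<phi>\<close> is, up to higher order terms, the
  time integral of \<open>cos \<phi>\<close>; it is bounded because \<open>\<omega>bar > abar\<close>.\<close>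
definition phase_gauge :: "real \<Rightarrow> real" where
  "phase_gauge \<phi> = - ln (omega_bar - a_bar * sin \<phi>) / a_bar"

definition gauge_bound :: "real" where
  "gauge_bound = (\<bar>ln (omega_bar - a_bar)\<bar> + \<bar>ln (omega_bar + a_bar)\<bar>) / a_bar"

definition coupling_exp :: "real \<Rightarrow> (real^'n) endo" where
  "coupling_exp s = exp (s *\<^sub>R cross_coupling_endo)"

definition coupling_exp_bound :: "real" where
  "coupling_exp_bound = exp (gauge_bound * norm cross_coupling_endo)"

lemma a_bar_pos: "a_bar > 0" using cross_pos by (simp add: a_bar_def)
lemma omega_bar_minus_a_bar_pos: "omega_bar - a_bar > 0" using gap by (simp add: a_bar_def omega_bar_def)

lemma gauge_denominator_bounds:
  "omega_bar - a_bar \<le> omega_bar - a_bar * sin x" "omega_bar - a_bar * sin x \<le> omega_bar + a_bar"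
  using a_bar_pos mult_left_mono[of "sin x" 1 a_bar] mult_left_mono[of "-1" "sin x" a_bar] by auto

lemma gauge_denominator_pos: "omega_bar - a_bar * sin x > 0"
  using gauge_denominator_bounds(1)[of x] omega_bar_minus_a_bar_pos by linarith

lemma abs_phase_gauge_le: "\<bar>phase_gauge x\<bar> \<le> gauge_bound"
proof -
  have "ln (omega_bar - a_bar) \<le> ln (omega_bar - a_bar * sin x)"
    using gauge_denominator_bounds(1)[of x] omega_bar_minus_a_bar_pos by (subst ln_le_cancel_iff) auto
  moreover have "ln (omega_bar - a_bar * sin x) \<le> ln (omega_bar + a_bar)"
    using gauge_denominator_bounds(2)[of x] gauge_denominator_pos[of x] by (subst ln_le_cancel_iff) auto
  ultimately have "\<bar>ln (omega_bar - a_bar * sin x)\<bar> \<le> \<bar>ln (omega_bar - a_bar)\<bar> + \<bar>ln (omega_bar + a_bar)\<bar>"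
    by linarith
  then show ?thesis using a_bar_pos by (simp add: phase_gauge_def gauge_bound_def abs_divide divide_right_mono)
qed

lemma phase_gauge_has_derivative:
  "(phase_gauge has_real_derivative (cos x / (omega_bar - a_bar * sin x))) (at x within S)"
proof -
  have "((\<lambda>x. - ln (omega_bar - a_bar * sin x) / a_bar) has_real_derivative
         (- ((- a_bar * cos x) / (omega_bar - a_bar * sin x)) / a_bar)) (at x within S)"
    using gauge_denominator_pos[of x] by (auto intro!: derivative_eq_intros)
  moreover have "- ((- a_bar * cos x) / (omega_bar - a_bar * sin x)) / a_bar =
      cos x / (omega_bar - a_bar * sin x)"
    using a_bar_pos by simp
  ultimately show ?thesis by (simp add: phase_gauge_def[abs_def])
qed

lemma coupling_exp_bound_ge_1: "coupling_exp_bound \<ge> 1"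
  using a_bar_pos by (simp add: coupling_exp_bound_def gauge_bound_def)

lemma norm_coupling_exp_le: "\<bar>s\<bar> \<le> gauge_bound \<Longrightarrow> norm (coupling_exp s) \<le> coupling_exp_bound"
  unfolding coupling_exp_def coupling_exp_bound_def
  by (rule order_trans[OF norm_exp]) (simp add: mult_right_mono)

text \<open>Conjugating by \<open>coupling_exp (- phase_gauge \<phi>)\<close> removes the time-dependent linear term
  \<open>cos \<phi> \<cdot> cross_coupling\<close> from the dynamics of the intra-cluster deviations.\<close>
definition gauged :: "real^'n \<Rightarrow> real^'n" where
  "gauged \<theta> = endo_apply (coupling_exp (- phase_gauge (phase_gap \<theta>))) (centered \<theta>)"

definition gauge_rate :: "real^'n \<Rightarrow> real" where
  "gauge_rate \<theta> =
    phase_gap (f \<theta>) * (cos (phase_gap \<theta>) / (omega_bar - a_bar * sin (phase_gap \<theta>)))"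

definition gauged_remainder :: "real^'n \<Rightarrow> real^'n" where
  "gauged_remainder \<theta> = endo_apply (coupling_exp (- phase_gauge (phase_gap \<theta>)))
    ((cos (phase_gap \<theta>) - gauge_rate \<theta>) *\<^sub>R cross_coupling (centered \<theta>) + centered_remainder \<theta>)"

lemma gauged_has_vector_derivative:
  assumes "(\<theta> has_vector_derivative f (\<theta> t)) (at t within S)"
  shows "((\<lambda>t. gauged (\<theta> t)) has_vector_derivative \<alpha> *\<^sub>R gauged (\<theta> t) + gauged_remainder (\<theta> t))
    (at t within S)"
proof -
  interpret B: bounded_bilinear endo_apply by (rule bounded_bilinear_endo_apply)
  let ?gap = "\<lambda>t. phase_gap (\<theta> t)" and ?E = "coupling_exp (- phase_gauge (phase_gap (\<theta> t)))"
  have "(?gap has_vector_derivative phase_gap (f (\<theta> t))) (at t within S)"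
    by (rule bounded_linear.has_vector_derivative[OF bounded_linear_phase_gap assms])
  then have "((\<lambda>t. - phase_gauge (?gap t)) has_vector_derivative - gauge_rate (\<theta> t)) (at t within S)"
    unfolding gauge_rate_def
    by (intro has_vector_derivative_minus field_vector_diff_chain_within[OF _ phase_gauge_has_derivative,
          unfolded o_def])
  then have "((\<lambda>t. coupling_exp (- phase_gauge (?gap t))) has_vector_derivative
      (- gauge_rate (\<theta> t)) *\<^sub>R (?E * cross_coupling_endo)) (at t within S)"
    unfolding coupling_exp_def
    by (rule vector_diff_chain_within[OF _ exp_scaleR_has_vector_derivative_right, unfolded o_def])
  moreover have "((\<lambda>t. centered (\<theta> t)) has_vector_derivative centered (f (\<theta> t))) (at t within S)"
    by (rule bounded_linear.has_vector_derivative[OF bounded_linear_centered assms])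
  ultimately have "((\<lambda>t. gauged (\<theta> t)) has_vector_derivative
      endo_apply ?E (centered (f (\<theta> t)))
      + endo_apply ((- gauge_rate (\<theta> t)) *\<^sub>R (?E * cross_coupling_endo)) (centered (\<theta> t))) (at t within S)"
    unfolding gauged_def by (rule B.has_vector_derivative)
  moreover have "centered (f (\<theta> t)) = \<alpha> *\<^sub>R centered (\<theta> t)
      + cos (phase_gap (\<theta> t)) *\<^sub>R cross_coupling (centered (\<theta> t)) + centered_remainder (\<theta> t)"
    by (simp add: centered_remainder_def)
  ultimately show ?thesis
    by (simp add: gauged_def gauged_remainder_def B.add_right B.diff_right B.minus_left B.scaleR_right
        B.scaleR_left endo_apply_mult endo_apply_cross_coupling_endo algebra_simps)
qed

lemma norm_centered_le_gauged: "norm (centered \<theta>) \<le> coupling_exp_bound * norm (gauged \<theta>)"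
proof -
  have "centered \<theta> = endo_apply (coupling_exp (phase_gauge (phase_gap \<theta>))) (gauged \<theta>)"
    unfolding gauged_def coupling_exp_def by (rule endo_apply_exp_inverse[symmetric])
  also have "norm \<dots> \<le> coupling_exp_bound * norm (gauged \<theta>)"
    using norm_endo_apply_le norm_coupling_exp_le[OF abs_phase_gauge_le]
    by (rule order_trans[OF _ mult_right_mono]) simp
  finally show ?thesis .
qed

lemma norm_gauged_le: "norm (gauged \<theta>) \<le> coupling_exp_bound * norm (centered \<theta>)"
proof -
  have "norm (coupling_exp (- phase_gauge (phase_gap \<theta>))) \<le> coupling_exp_bound"
    using abs_phase_gauge_le by (intro norm_coupling_exp_le) simp
  then show ?thesis
    unfolding gauged_def by (rule order_trans[OF norm_endo_apply_le mult_right_mono]) simp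
qed

definition gauge_error_const :: "real" where
  "gauge_error_const =
    8 * total_weight * norm cross_coupling_endo / (omega_bar - a_bar) + centered_remainder_const"

lemma gauge_error_const_nonneg: "gauge_error_const \<ge> 0"
  using total_weight_nonneg omega_bar_minus_a_bar_pos centered_remainder_const_nonneg
  by (simp add: gauge_error_const_def)

lemma abs_cos_sub_gauge_rate_le:
  "\<bar>cos (phase_gap \<theta>) - gauge_rate \<theta>\<bar> \<le> 8 * total_weight * (norm (centered \<theta>))\<^sup>2 / (omega_bar - a_bar)"
proof -
  let ?D = "omega_bar - a_bar * sin (phase_gap \<theta>)"
  let ?r = "phase_gap (f \<theta>) - ?D"
  have D: "omega_bar - a_bar \<le> ?D" "?D > 0"
    using gauge_denominator_bounds(1) gauge_denominator_pos by auto
  have "cos (phase_gap \<theta>) - gauge_rate \<theta> = - cos (phase_gap \<theta>) * ?r / ?D"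
    using D by (simp add: gauge_rate_def field_simps)
  then have "\<bar>cos (phase_gap \<theta>) - gauge_rate \<theta>\<bar> = \<bar>cos (phase_gap \<theta>)\<bar> * \<bar>?r\<bar> / ?D"
    using D by (simp add: abs_mult)
  also have "\<dots> \<le> 1 * \<bar>?r\<bar> / ?D"
    using D by (intro divide_right_mono mult_right_mono) auto
  also have "\<dots> \<le> \<bar>?r\<bar> / (omega_bar - a_bar)"
    using D omega_bar_minus_a_bar_pos by (simp add: frac_le)
  also have "\<dots> \<le> 8 * total_weight * (norm (centered \<theta>))\<^sup>2 / (omega_bar - a_bar)"
    using abs_phase_gap_remainder_le[of \<theta>] omega_bar_minus_a_bar_pos
    by (simp add: divide_right_mono omega_bar_def a_bar_def)
  finally show ?thesis .
qed

lemma norm_gauge_error_le: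
  assumes "norm (centered \<theta>) \<le> 1"
  shows "norm ((cos (phase_gap \<theta>) - gauge_rate \<theta>) *\<^sub>R cross_coupling (centered \<theta>) + centered_remainder \<theta>)
     \<le> gauge_error_const * (norm (centered \<theta>))\<^sup>2"
proof -
  let ?u = "norm (centered \<theta>)"
  have M: "norm (cross_coupling (centered \<theta>)) \<le> norm cross_coupling_endo * ?u"
    using norm_endo_apply_le[of cross_coupling_endo] by (simp add: endo_apply_cross_coupling_endo)
  have "norm ((cos (phase_gap \<theta>) - gauge_rate \<theta>) *\<^sub>R cross_coupling (centered \<theta>) + centered_remainder \<theta>)
      \<le> \<bar>cos (phase_gap \<theta>) - gauge_rate \<theta>\<bar> * norm (cross_coupling (centered \<theta>))
        + norm (centered_remainder \<theta>)"
    by (rule order_trans[OF norm_triangle_ineq]) simp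
  also have "\<dots> \<le> (8 * total_weight * ?u\<^sup>2 / (omega_bar - a_bar)) * (norm cross_coupling_endo * ?u)
      + centered_remainder_const * ?u\<^sup>2"
    using total_weight_nonneg omega_bar_minus_a_bar_pos
    by (intro add_mono mult_mono abs_cos_sub_gauge_rate_le M norm_centered_remainder_le) auto
  also have "\<dots> \<le> (8 * total_weight * ?u\<^sup>2 / (omega_bar - a_bar)) * (norm cross_coupling_endo * 1)
      + centered_remainder_const * ?u\<^sup>2"
    using assms total_weight_nonneg omega_bar_minus_a_bar_pos centered_remainder_const_nonneg
    by (intro add_mono mult_left_mono) auto
  also have "\<dots> = gauge_error_const * ?u\<^sup>2"
    by (simp add: gauge_error_const_def algebra_simps)
  finally show ?thesis .
qed

definition gauged_remainder_const :: "real" where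
  "gauged_remainder_const = coupling_exp_bound ^ 3 * gauge_error_const"

lemma norm_gauged_remainder_le:
  assumes "norm (gauged \<theta>) \<le> 1 / coupling_exp_bound"
  shows "norm (gauged_remainder \<theta>) \<le> gauged_remainder_const * (norm (gauged \<theta>))\<^sup>2"
proof -
  let ?B = coupling_exp_bound and ?u = "norm (centered \<theta>)" and ?w = "norm (gauged \<theta>)"
  have B: "?B \<ge> 1" by (rule coupling_exp_bound_ge_1)
  have "?u \<le> 1"
    using norm_centered_le_gauged[of \<theta>] mult_left_mono[OF assms, of ?B] B by simp
  have E: "norm (coupling_exp (- phase_gauge (phase_gap \<theta>))) \<le> ?B"
    using abs_phase_gauge_le by (intro norm_coupling_exp_le) simp
  have "norm (gauged_remainder \<theta>) \<le> ?B * (gauge_error_const * ?u\<^sup>2)"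
    unfolding gauged_remainder_def
    by (rule order_trans[OF norm_endo_apply_le mult_mono[OF E norm_gauge_error_le[OF \<open>?u \<le> 1\<close>]]])
      (use B in auto)
  also have "\<dots> \<le> ?B * (gauge_error_const * (?B * ?w)\<^sup>2)"
    using norm_centered_le_gauged[of \<theta>] B gauge_error_const_nonneg
    by (intro mult_left_mono power_mono) auto
  also have "\<dots> = gauged_remainder_const * ?w\<^sup>2"
    by (simp add: gauged_remainder_const_def power2_eq_square power3_eq_cube)
  finally show ?thesis .
qed

lemma gauged_remainder_const_nonneg: "gauged_remainder_const \<ge> 0"
  using gauge_error_const_nonneg coupling_exp_bound_ge_1 by (simp add: gauged_remainder_const_def)

definition decay_radius :: "real" where
  "decay_radius = min (- \<alpha> / (2 * gauged_remainder_const + 1)) (1 / coupling_exp_bound)"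

lemma decay_radius_pos: "decay_radius > 0"
  using alpha_neg gauged_remainder_const_nonneg coupling_exp_bound_ge_1
  by (simp add: decay_radius_def divide_neg_pos)

lemma gauged_dissipation:
  assumes "norm (gauged \<theta>) \<le> decay_radius"
  shows "inner (gauged \<theta>) (\<alpha> *\<^sub>R gauged \<theta> + gauged_remainder \<theta>) \<le> \<alpha> / 2 * (norm (gauged \<theta>))\<^sup>2"
proof -
  let ?K = gauged_remainder_const and ?w = "norm (gauged \<theta>)"
  have K: "?K \<ge> 0" by (rule gauged_remainder_const_nonneg)
  have "?K * ?w \<le> ?K * (- \<alpha> / (2 * ?K + 1))"
    using assms K by (intro mult_left_mono) (auto simp: decay_radius_def)
  also have "\<dots> \<le> - \<alpha> / 2"
    using K alpha_neg by (simp add: field_simps)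
  finally have small: "?K * ?w \<le> - \<alpha> / 2" .
  have "inner (gauged \<theta>) (gauged_remainder \<theta>) \<le> ?w * norm (gauged_remainder \<theta>)"
    by (rule norm_cauchy_schwarz)
  also have "\<dots> \<le> ?w * (?K * ?w\<^sup>2)"
    using assms by (intro mult_left_mono norm_gauged_remainder_le) (auto simp: decay_radius_def)
  also have "\<dots> = (?K * ?w) * ?w\<^sup>2" by (simp add: power2_eq_square)
  also have "\<dots> \<le> (- \<alpha> / 2) * ?w\<^sup>2"
    using small by (rule mult_right_mono) simp
  finally show ?thesis
    by (simp add: inner_add_right power2_norm_eq_inner algebra_simps)
qed

lemma centered_exp_decay:
  assumes sol: "\<And>t. t \<ge> 0 \<Longrightarrow> (\<theta> has_vector_derivative f (\<theta> t)) (at t within {0..})"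
    and start: "norm (centered (\<theta> 0)) < decay_radius / coupling_exp_bound" and "t \<ge> 0"
  shows "norm (centered (\<theta> t)) \<le> coupling_exp_bound\<^sup>2 * exp (\<alpha> / 2 * t) * norm (centered (\<theta> 0))"
proof -
  let ?B = coupling_exp_bound
  have B: "?B \<ge> 1" by (rule coupling_exp_bound_ge_1)
  have "norm (gauged (\<theta> 0)) < decay_radius"
    using norm_gauged_le[of "\<theta> 0"] mult_strict_left_mono[OF start, of ?B] B by simp
  then have "norm (gauged (\<theta> t)) \<le> exp (\<alpha> / 2 * t) * norm (gauged (\<theta> 0))"
    using alpha_neg \<open>t \<ge> 0\<close>
    by (intro norm_exp_decay_of_local_dissipation[where \<epsilon> = decay_radius
          and w' = "\<lambda>t. \<alpha> *\<^sub>R gauged (\<theta> t) + gauged_remainder (\<theta> t)"]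
        gauged_has_vector_derivative sol gauged_dissipation) auto
  then have "norm (centered (\<theta> t)) \<le> ?B * (exp (\<alpha> / 2 * t) * (?B * norm (centered (\<theta> 0))))"
    using norm_centered_le_gauged[of "\<theta> t"] norm_gauged_le[of "\<theta> 0"] B
    by (smt (verit) exp_ge_zero mult_left_mono norm_ge_zero)
  then show ?thesis by (simp add: power2_eq_square mult_ac)
qed

subsection \<open>Distance to the synchronization manifold\<close>

lemma norm_centered_le: "norm (centered v) \<le> norm v"
proof -
  define c where "c = v - centered v"
  have "inner (centered v) c = (\<Sum>i\<in>P1. (centered v)$i * c$i) + (\<Sum>i\<in>P2. (centered v)$i * c$i)"
    using sum.union_disjoint[of P1 P2 "\<lambda>i. (centered v)$i * c$i"] disj cover by (simp add: inner_vec_def)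
  also have "\<dots> = (\<Sum>i\<in>P1. (centered v)$i) * average P1 (\<lambda>j. v$j)
      + (\<Sum>i\<in>P2. (centered v)$i) * average P2 (\<lambda>j. v$j)"
    by (simp add: c_def centered_def cluster_def notin_P1 sum_distrib_right cong: sum.cong)
  finally have "inner (centered v) c = 0" using sum_centered[of P1 v] sum_centered[of P2 v] by simp
  then have "(norm (centered v + c))\<^sup>2 = (norm (centered v))\<^sup>2 + (norm c)\<^sup>2"
    by (rule norm_add_Pythagorean[unfolded orthogonal_def])
  then have "(norm (centered v))\<^sup>2 \<le> (norm v)\<^sup>2"
    using zero_le_power2[of "norm c"] by (simp add: c_def)
  then show ?thesis by (rule power2_le_imp_le) simp
qed

lemma centered_eq_0: "(\<And>i j. j \<in> cluster i \<Longrightarrow> v$j = v$i) \<Longrightarrow> centered v = 0"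
  using clusters_finite_nonempty[OF cluster_in] in_cluster
  by (simp add: centered_def vec_eq_iff average_const_on)

lemma sync_manifold_lattice_representative:
  assumes "s \<in> sync_manifold {P1, P2}"
  obtains k where "k \<in> phase_lattice" "centered (s - k) = 0"
proof
  define base where "base i = (SOME j. j \<in> cluster i)" for i
  have base: "base i \<in> cluster i" for i
    unfolding base_def by (rule someI) (rule in_cluster)
  have base_eq: "base j = base i" if "j \<in> cluster i" for i j
    using cluster_eq[OF cluster_in that] by (simp add: base_def)
  show "(\<chi> i. s$i - s$(base i)) \<in> phase_lattice"
    using assms base cluster_in in_cluster by (simp add: phase_lattice_def sync_manifold_def) blast
  show "centered (s - (\<chi> i. s$i - s$(base i))) = 0"
    by (rule centered_eq_0) (simp add: base_eq)
qed

lemma infdist_sync_manifold_le: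
  assumes "k \<in> phase_lattice"
  shows "infdist \<theta> (sync_manifold {P1, P2}) \<le> norm (centered (\<theta> - k))"
proof -
  define p where "p = \<theta> - centered (\<theta> - k)"
  have "p$j - p$i = k$j - k$i" if "P \<in> {P1, P2}" "i \<in> P" "j \<in> P" for P i j
    using cluster_eq[OF that(1,2)] cluster_eq[OF that(1,3)] by (simp add: p_def centered_def)
  then have "\<exists>m::int. p$j - p$i = 2 * pi * of_int m" if "P \<in> {P1, P2}" "i \<in> P" "j \<in> P" for P i j
    using that phase_lattice_diff[OF assms, of j i] by simp
  then have "p \<in> sync_manifold {P1, P2}" unfolding sync_manifold_def by blast
  then have "infdist \<theta> (sync_manifold {P1, P2}) \<le> dist \<theta> p" by (rule infdist_le)
  then show ?thesis by (simp add: p_def dist_norm)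
qed

lemma locally_exp_stable_sync_manifold: "locally_exp_stable f (sync_manifold {P1, P2})"
  unfolding locally_exp_stable_def
proof (intro exI conjI allI impI)
  let ?B = coupling_exp_bound and ?S = "sync_manifold {P1, P2}"
  show "decay_radius / ?B > 0" "?B\<^sup>2 > 0" "- \<alpha> / 2 > 0"
    using decay_radius_pos coupling_exp_bound_ge_1 alpha_neg by auto
  fix \<theta> :: "real \<Rightarrow> real^'n" and t :: real
  assume "(\<forall>t\<ge>0. (\<theta> has_vector_derivative f (\<theta> t)) (at t within {0..})) \<and> infdist (\<theta> 0) ?S < decay_radius / ?B"
  then have sol: "\<And>t. t \<ge> 0 \<Longrightarrow> (\<theta> has_vector_derivative f (\<theta> t)) (at t within {0..})"
    and close: "infdist (\<theta> 0) ?S < decay_radius / ?B" by auto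
  assume "0 \<le> t"
  show "infdist (\<theta> t) ?S \<le> ?B\<^sup>2 * exp (- (- \<alpha> / 2) * t) * infdist (\<theta> 0) ?S"
  proof (rule le_mult_infdist[OF _ close])
    show "?S \<noteq> {}" by (auto simp: sync_manifold_def intro!: exI[of _ 0])
    fix s assume "s \<in> ?S" and s_close: "dist (\<theta> 0) s < decay_radius / ?B"
    obtain k where k: "k \<in> phase_lattice" "centered (s - k) = 0"
      using \<open>s \<in> ?S\<close> by (rule sync_manifold_lattice_representative)
    have "(\<theta> 0 - k) = (\<theta> 0 - s) + (s - k)" by simp
    then have "norm (centered (\<theta> 0 - k)) \<le> dist (\<theta> 0) s"
      using k(2) norm_centered_le[of "\<theta> 0 - s"] linear_add[OF bounded_linear.linear[OF bounded_linear_centered]]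
      by (metis add.right_neutral dist_norm)
    moreover have "((\<lambda>t. \<theta> t - k) has_vector_derivative f (\<theta> t - k)) (at t within {0..})" if "t \<ge> 0" for t
      using iffD2[OF has_vector_derivative_diff_const sol[OF that]] kuramoto_diff_lattice[OF k(1)]
      by simp
    ultimately have "norm (centered ((\<lambda>t. \<theta> t - k) t))
        \<le> ?B\<^sup>2 * exp (\<alpha> / 2 * t) * norm (centered ((\<lambda>t. \<theta> t - k) 0))"
      using s_close \<open>0 \<le> t\<close> by (intro centered_exp_decay) auto
    also have "\<dots> \<le> ?B\<^sup>2 * exp (\<alpha> / 2 * t) * dist (\<theta> 0) s"
      using \<open>norm (centered (\<theta> 0 - k)) \<le> dist (\<theta> 0) s\<close> by (intro mult_left_mono) auto
    finally show "infdist (\<theta> t) ?S \<le> ?B\<^sup>2 * exp (- (- \<alpha> / 2) * t) * dist (\<theta> 0) s"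
      using infdist_sync_manifold_le[OF k(1), of "\<theta> t"] by simp
  qed (use coupling_exp_bound_ge_1 in auto)
qed

end

theorem theorem4:
  fixes a :: "'n::{finite,linorder} \<Rightarrow> 'n \<Rightarrow> real"
    and \<omega> :: "'n \<Rightarrow> real"
    and P1 P2 :: "'n set"
    and E1 E2 :: "('n \<times> 'n) set"
    and \<omega>1 \<omega>2 \<alpha> :: real
  assumes sym: "\<And>i j. a i j = a j i"
    and nonneg: "\<And>i j. a i j \<ge> 0"
    and noloop: "\<And>i. a i i = 0"
    and conn: "connected_on UNIV (graph_edges a)"
    and omega_pos: "\<And>i. \<omega> i > 0"
    and part: "P1 \<inter> P2 = {}" "P1 \<union> P2 = UNIV" "P1 \<noteq> {}" "P2 \<noteq> {}"
    and conn1: "connected_on P1 (graph_edges a)"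
    and conn2: "connected_on P2 (graph_edges a)"
    and A2: "\<And>i. i \<in> P1 \<Longrightarrow> \<omega> i = \<omega>1" "\<And>i. i \<in> P2 \<Longrightarrow> \<omega> i = \<omega>2"
    and A3: "\<And>i j. i \<in> P1 \<Longrightarrow> j \<in> P1 \<Longrightarrow> (\<Sum>k\<in>P2. a i k - a j k) = 0"
            "\<And>i j. i \<in> P2 \<Longrightarrow> j \<in> P2 \<Longrightarrow> (\<Sum>k\<in>P1. a i k - a j k) = 0"
    and order: "\<omega>1 \<le> \<omega>2"
    and gap: "\<And>i j. i \<in> P1 \<Longrightarrow> j \<in> P2 \<Longrightarrow> \<omega>2 - \<omega>1 > (\<Sum>k\<in>P2. a i k) + (\<Sum>k\<in>P1. a j k)"
    and T1: "spanning_tree a P1 E1"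
    and T2: "spanning_tree a P2 E2"
    and alpha_neg: "\<alpha> < 0"
    and jac: "\<exists>J. (F_intra a P1 P2 E1 E2 has_derivative J) (at 0) \<and>
                 (\<forall>v. (\<forall>e. e \<notin> E1 \<union> E2 \<longrightarrow> v $ e = 0) \<longrightarrow> J v = \<alpha> *\<^sub>R v)"
  shows "locally_exp_stable (kuramoto a \<omega>) (sync_manifold {P1, P2})"
proof -
  obtain i1 i2 where i1: "i1 \<in> P1" and i2: "i2 \<in> P2" using part by blast
  define s1 where "s1 = (\<Sum>k\<in>P2. a i1 k)"
  define s2 where "s2 = (\<Sum>k\<in>P1. a i2 k)"
  have row1: "(\<Sum>k\<in>P2. a i k) = s1" if "i \<in> P1" for i
    using A3(1)[OF that i1] by (simp add: s1_def sum_subtractf)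
  have row2: "(\<Sum>k\<in>P1. a i k) = s2" if "i \<in> P2" for i
    using A3(2)[OF that i2] by (simp add: s2_def sum_subtractf)
  obtain i k where "i \<in> P1" "k \<in> P2" "a i k > 0"
    using connected_on_crossing_edge[OF conn part(1,2) i1 i2] sym by (auto simp: graph_edges_def)
  then have "s1 > 0"
    using row1 member_le_sum[of k P2 "a i"] nonneg by fastforce
  moreover have "s2 \<ge> 0" unfolding s2_def by (intro sum_nonneg nonneg)
  ultimately interpret two_cluster_kuramoto a P1 P2 \<omega> \<omega>1 \<omega>2 \<alpha> s1 s2
    using sym nonneg noloop part A2 row1 row2 gap[OF i1 i2] alpha_neg
      F_intra_intra_laplacian[OF sym part(1) T1 T2] jac
    by unfold_locales (auto simp: s1_def s2_def)
  show ?thesis by (rule locally_exp_stable_sync_manifold)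
qed

end
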